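(* Let $(V,\|\cdot\|)$ be a normed plane with unit circle $S$ and let $x,y\in V$ be nonzero with $x\dashv_B y$. Then $\|T_{xy}(z)\|\le 3$ for every $z\in S$. Moreover, if $\|T_{xy}(z)\|=3$ for some $z\in S$, then the plane is rectilinear (its unit circle is a parallelogram).
   Context: A normed (Minkowski) plane $(V,\|\cdot\|)$ is a two-dimensional real vector space with a norm; $S=\{v:\|v\|=1\}$ is its unit circle. For nonzero $x,y$, $x$ is Birkhoff orthogonal to $y$, written $x\dashv_B y$, if $\|x+ty\|\ge\|x\|$ for all $t\in\mathbb{R}$ (this forces $x,y$ to be linearly independent). For linearly independent $x,y\in V$, $T_{xy}:V\to V$ is the linear map with $T_{xy}(x)=x$ and $T_{xy}(y)=-y$. A normed plane is rectilinear if its unit circle is a parallelogram. *)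

theory Defs
  imports "HOL-Analysis.Analysis"
begin

text \<open>A normed plane is modelled as the real vector space \<open>real^2\<close> equipped with an
  arbitrary norm \<open>N\<close> (every two-dimensional real vector space is linearly isomorphic to it).\<close>

definition is_norm :: "(real^2 \<Rightarrow> real) \<Rightarrow> bool" where
  "is_norm N \<longleftrightarrow>
     (\<forall>v. N v = 0 \<longleftrightarrow> v = 0) \<and>
     (\<forall>c v. N (c *\<^sub>R v) = \<bar>c\<bar> * N v) \<and>
     (\<forall>u v. N (u + v) \<le> N u + N v)"

definition unit_circle :: "(real^2 \<Rightarrow> real) \<Rightarrow> (real^2) set" where
  "unit_circle N = {v. N v = 1}"

definition birkhoff_orth :: "(real^2 \<Rightarrow> real) \<Rightarrow> real^2 \<Rightarrow> real^2 \<Rightarrow> bool" where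
  "birkhoff_orth N x y \<longleftrightarrow> x \<noteq> 0 \<and> y \<noteq> 0 \<and> (\<forall>t::real. N (x + t *\<^sub>R y) \<ge> N x)"

definition T_map :: "real^2 \<Rightarrow> real^2 \<Rightarrow> (real^2 \<Rightarrow> real^2)" where
  "T_map x y = (THE T. linear T \<and> T x = x \<and> T y = - y)"

definition is_parallelogram :: "(real^2) set \<Rightarrow> bool" where
  "is_parallelogram P \<longleftrightarrow>
     (\<exists>p a b. a \<noteq> b \<and> independent {a, b} \<and>
        P = frontier {p + s *\<^sub>R a + t *\<^sub>R b | s t. 0 \<le> s \<and> s \<le> 1 \<and> 0 \<le> t \<and> t \<le> 1})"

definition rectilinear :: "(real^2 \<Rightarrow> real) \<Rightarrow> bool" where
  "rectilinear N \<longleftrightarrow> is_parallelogram (unit_circle N)"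

end

theory Submission
  imports Defs
begin

text \<open>Write \<open>z = a x + t y\<close>. Birkhoff orthogonality gives \<open>\<parallel>a x\<parallel> \<le> \<parallel>z\<parallel>\<close>, and
  \<open>T\<^sub>x\<^sub>y z = 2 a x - z\<close>, so \<open>\<parallel>T\<^sub>x\<^sub>y z\<parallel> \<le> 2\<parallel>a x\<parallel> + \<parallel>z\<parallel> \<le> 3\<parallel>z\<parallel>\<close>. If equality holds for
  \<open>\<parallel>z\<parallel> = 1\<close>, put \<open>u = a x\<close> and \<open>w = z\<close>: then \<open>\<parallel>u\<parallel> = \<parallel>w\<parallel> = 1\<close>, \<open>u \<stileturn>\<^sub>B w - u\<close> forces
  \<open>\<parallel>u + w\<parallel> = \<parallel>u\<parallel> + \<parallel>w\<parallel>\<close>, and \<open>\<parallel>2u - w\<parallel> = \<parallel>2u\<parallel> + \<parallel>w\<parallel>\<close>. Equality in the triangle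
  inequality propagates to the cones spanned by \<open>u, w\<close> and by \<open>u, -w\<close>, so
  \<open>\<parallel>\<alpha> u + \<beta> w\<parallel> = |\<alpha>| + |\<beta>|\<close>: the unit ball is the parallelogram with vertices \<open>\<plusminus>u, \<plusminus>w\<close>.\<close>

lemma
  assumes "is_norm N"
  shows is_norm_eq_0_iff: "N v = 0 \<longleftrightarrow> v = 0"
    and is_norm_scaleR: "N (c *\<^sub>R v) = \<bar>c\<bar> * N v"
    and is_norm_triangle: "N (u + v) \<le> N u + N v"
  using assms unfolding is_norm_def by blast+

lemma is_norm_zero: "is_norm N \<Longrightarrow> N 0 = 0"
  by (simp add: is_norm_eq_0_iff)

lemma is_norm_minus: "is_norm N \<Longrightarrow> N (- v) = N v"
  using is_norm_scaleR[of N "-1" v] by simp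

lemma is_norm_diff: "is_norm N \<Longrightarrow> N (u - v) \<le> N u + N v"
  using is_norm_triangle[of N u "- v"] by (simp add: is_norm_minus)

lemma is_norm_nonneg: "is_norm N \<Longrightarrow> 0 \<le> N v"
  using is_norm_triangle[of N v "- v"] by (simp add: is_norm_minus is_norm_zero)

lemma is_norm_pos: "is_norm N \<Longrightarrow> v \<noteq> 0 \<Longrightarrow> 0 < N v"
  using is_norm_nonneg is_norm_eq_0_iff by (metis less_eq_real_def)

lemma is_norm_continuous_on:
  assumes N: "is_norm N"
  shows "continuous_on UNIV N"
proof -
  define C where "C = N (axis 1 1) + N (axis 2 1)"
  have bound: "N v \<le> C * norm v" for v :: "real^2"
  proof -
    have "v = (v$1) *\<^sub>R axis 1 1 + (v$2) *\<^sub>R axis 2 1"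
      by (simp add: vec_eq_iff forall_2 axis_def)
    then have "N v \<le> \<bar>v$1\<bar> * N (axis 1 1) + \<bar>v$2\<bar> * N (axis 2 1)"
      by (metis N is_norm_scaleR is_norm_triangle)
    also have "\<dots> \<le> norm v * N (axis 1 1) + norm v * N (axis 2 1)"
      by (intro add_mono mult_right_mono component_le_norm_cart is_norm_nonneg[OF N])
    finally show ?thesis by (simp add: C_def algebra_simps)
  qed
  have "C-lipschitz_on UNIV N"
  proof (rule lipschitz_onI)
    fix a b :: "real^2"
    have "\<bar>N a - N b\<bar> \<le> N (a - b)"
      using is_norm_triangle[OF N, of "a - b" b] is_norm_triangle[OF N, of "b - a" a]
        is_norm_minus[OF N, of "a - b"] by simp
    also have "\<dots> \<le> C * norm (a - b)" by (rule bound)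
    finally show "dist (N a) (N b) \<le> C * dist a b" by (simp add: dist_norm dist_real_def)
  qed (simp add: C_def is_norm_nonneg[OF N])
  then show ?thesis by (rule lipschitz_on_continuous_on)
qed

lemma frontier_is_norm_ball:
  assumes N: "is_norm N"
  shows "frontier {v. N v \<le> 1} = {v. N v = 1}"
proof -
  have cont: "continuous_on UNIV N" by (rule is_norm_continuous_on[OF N])
  have closed: "closed {v. N v \<le> 1}"
    using closed_Collect_le[OF cont continuous_on_const] by simp
  have "interior {v. N v \<le> 1} = {v. N v < 1}"
  proof
    show "{v. N v < 1} \<subseteq> interior {v. N v \<le> 1}"
      using open_Collect_less[OF cont continuous_on_const] by (intro interior_maximal) auto
    show "interior {v. N v \<le> 1} \<subseteq> {v. N v < 1}"
    proof
      fix v assume v: "v \<in> interior {v. N v \<le> 1}"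
      then obtain e where "e > 0" and ball: "ball v e \<subseteq> {v. N v \<le> 1}"
        by (auto simp: mem_interior)
      show "v \<in> {v. N v < 1}"
      proof (rule ccontr)
        assume "v \<notin> {v. N v < 1}"
        then have Nv: "N v = 1" using v interior_subset by fastforce
        then have "v \<noteq> 0" using is_norm_zero[OF N] by auto
        define d where "d = e / (2 * norm v)"
        have "d > 0" using \<open>e > 0\<close> \<open>v \<noteq> 0\<close> by (simp add: d_def)
        have "dist v ((1 + d) *\<^sub>R v) = d * norm v"
          using \<open>d > 0\<close> by (simp add: dist_norm scaleR_add_left)
        also have "\<dots> = e / 2" using \<open>v \<noteq> 0\<close> by (simp add: d_def)
        finally have "(1 + d) *\<^sub>R v \<in> ball v e" using \<open>e > 0\<close> by simp
        then have "N ((1 + d) *\<^sub>R v) \<le> 1" using ball by blast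
        then show False using is_norm_scaleR[OF N] Nv \<open>d > 0\<close> by simp
      qed
    qed
  qed
  then show ?thesis unfolding frontier_def closure_closed[OF closed] by auto
qed

lemma is_norm_additive_cone:
  assumes N: "is_norm N" and add: "N (p + q) = N p + N q" and "0 \<le> l" "0 \<le> m"
  shows "N (l *\<^sub>R p + m *\<^sub>R q) = l * N p + m * N q"
proof (rule antisym)
  show "N (l *\<^sub>R p + m *\<^sub>R q) \<le> l * N p + m * N q"
    using is_norm_triangle[OF N, of "l *\<^sub>R p" "m *\<^sub>R q"] is_norm_scaleR[OF N] assms by simp
  have le: "l * N p + m * N q \<le> N (l *\<^sub>R p + m *\<^sub>R q)"
    if "0 \<le> m" "m \<le> l" "N (p + q) = N p + N q" for l m p q
  proof -
    have "l *\<^sub>R (p + q) = (l *\<^sub>R p + m *\<^sub>R q) + (l - m) *\<^sub>R q" by (simp add: algebra_simps)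
    then have "N (l *\<^sub>R (p + q)) \<le> N (l *\<^sub>R p + m *\<^sub>R q) + N ((l - m) *\<^sub>R q)"
      using is_norm_triangle[OF N] by metis
    moreover have "N (l *\<^sub>R (p + q)) = l * (N p + N q)" "N ((l - m) *\<^sub>R q) = (l - m) * N q"
      using that by (simp_all add: is_norm_scaleR[OF N])
    ultimately show ?thesis by (simp add: algebra_simps)
  qed
  show "l * N p + m * N q \<le> N (l *\<^sub>R p + m *\<^sub>R q)"
  proof (cases "m \<le> l")
    case True
    show ?thesis using le[OF \<open>0 \<le> m\<close> True add] .
  next
    case False
    have add': "N (q + p) = N q + N p" using add by (simp add: add.commute)
    have "l * N p + m * N q \<le> N (m *\<^sub>R q + l *\<^sub>R p)"
      using le[OF \<open>0 \<le> l\<close> _ add', of m] False by (simp add: add.commute)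
    then show ?thesis by (simp add: add.commute)
  qed
qed

lemma independent_pair:
  assumes "y \<noteq> 0" "x \<notin> span {y}"
  shows "independent {x, y}" and "x \<noteq> y"
  using assms span_base[of y "{y}"] by (auto simp: independent_insert)

lemma span_pair_eq_UNIV:
  fixes x y :: "real^2"
  assumes "y \<noteq> 0" "x \<notin> span {y}"
  shows "span {x, y} = UNIV"
  using card_ge_dim_independent[of "{x, y}" UNIV] independent_pair[OF assms] by auto

lemma pair_coordinates:
  fixes x y :: "real^2"
  assumes "y \<noteq> 0" "x \<notin> span {y}"
  obtains a b where "z = a *\<^sub>R x + b *\<^sub>R y"
proof -
  have "z \<in> span {x, y}" using span_pair_eq_UNIV[OF assms] by simp
  then show ?thesis
    using that by (auto simp: span_breakdown_eq span_singleton) (metis add.commute diff_add_cancel)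
qed

lemma T_map_apply:
  fixes x y :: "real^2"
  assumes "y \<noteq> 0" "x \<notin> span {y}"
  shows "T_map x y (a *\<^sub>R x + b *\<^sub>R y) = a *\<^sub>R x - b *\<^sub>R y"
proof -
  obtain T where "linear T" and T: "\<forall>v\<in>{x, y}. T v = (if v = x then x else - y)"
    using linear_independent_extend[OF independent_pair(1)[OF assms],
        where f = "\<lambda>v. if v = x then x else - y"] by blast
  then have Tx: "T x = x" and Ty: "T y = - y"
    using independent_pair(2)[OF assms] by auto
  have unique: "T' = T" if T': "linear T'" "T' x = x" "T' y = - y" for T'
  proof
    fix v
    show "T' v = T v"
    proof (rule linear_eq_on_span[OF T'(1) \<open>linear T\<close>])
      show "v \<in> span {x, y}" using span_pair_eq_UNIV[OF assms] by simp
    qed (use T' Tx Ty in auto)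
  qed
  have "T_map x y = T"
    unfolding T_map_def using \<open>linear T\<close> Tx Ty unique by blast
  then show ?thesis using \<open>linear T\<close> Tx Ty by (simp add: linear_add linear_scale)
qed

lemma birkhoff_orth_not_in_span:
  assumes N: "is_norm N" and xy: "birkhoff_orth N x y"
  shows "x \<notin> span {y}"
proof
  assume "x \<in> span {y}"
  then obtain c where "x = c *\<^sub>R y" by (auto simp: span_singleton)
  then have "N x \<le> N 0"
    using xy unfolding birkhoff_orth_def by (metis add.right_inverse scaleR_minus_left)
  moreover have "0 < N x" using xy is_norm_pos[OF N] by (simp add: birkhoff_orth_def)
  ultimately show False by (simp add: is_norm_zero[OF N])
qed

lemma birkhoff_orth_scaleR_le:
  assumes N: "is_norm N" and xy: "birkhoff_orth N x y"
  shows "N (a *\<^sub>R x) \<le> N (a *\<^sub>R x + t *\<^sub>R y)"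
proof (cases "a = 0")
  case False
  then have "a *\<^sub>R x + t *\<^sub>R y = a *\<^sub>R (x + (t / a) *\<^sub>R y)" by (simp add: scaleR_add_right)
  moreover have "N x \<le> N (x + (t / a) *\<^sub>R y)" using xy unfolding birkhoff_orth_def by blast
  ultimately show ?thesis by (simp add: is_norm_scaleR[OF N] mult_left_mono)
qed (simp add: is_norm_zero[OF N] is_norm_nonneg[OF N])

lemma birkhoff_orth_scaleR:
  assumes N: "is_norm N" and xy: "birkhoff_orth N x y" and "a \<noteq> 0" "b \<noteq> 0"
  shows "birkhoff_orth N (a *\<^sub>R x) (b *\<^sub>R y)"
  using xy assms(3,4) birkhoff_orth_scaleR_le[OF N xy, of a] unfolding birkhoff_orth_def
  by simp

lemma is_norm_l1_coordinates:
  assumes N: "is_norm N" and "N u = 1" "N w = 1"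
    and orth: "birkhoff_orth N u (w - u)" and three: "N (2 *\<^sub>R u - w) = 3"
  shows "N (\<alpha> *\<^sub>R u + \<beta> *\<^sub>R w) = \<bar>\<alpha>\<bar> + \<bar>\<beta>\<bar>"
proof -
  have "N (u + w) = N u + N w"
  proof (rule antisym)
    have "u + w = 2 *\<^sub>R (u + (1/2) *\<^sub>R (w - u))"
      by (simp add: scaleR_add_right scaleR_diff_right scaleR_2)
    moreover have "N u \<le> N (u + (1/2) *\<^sub>R (w - u))"
      using orth unfolding birkhoff_orth_def by blast
    ultimately show "N u + N w \<le> N (u + w)"
      using \<open>N u = 1\<close> \<open>N w = 1\<close> by (simp add: is_norm_scaleR[OF N])
  qed (rule is_norm_triangle[OF N])
  then have plus: "N (l *\<^sub>R u + m *\<^sub>R w) = l + m" if "0 \<le> l" "0 \<le> m" for l m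
    using is_norm_additive_cone[OF N _ that] \<open>N u = 1\<close> \<open>N w = 1\<close> by simp
  have reflection: "N (2 *\<^sub>R u + - w) = N (2 *\<^sub>R u) + N (- w)"
    using three \<open>N u = 1\<close> \<open>N w = 1\<close> by (simp add: is_norm_scaleR[OF N] is_norm_minus[OF N])
  have minus: "N (l *\<^sub>R u - m *\<^sub>R w) = l + m" if "0 \<le> l" "0 \<le> m" for l m
  proof -
    have "N ((l / 2) *\<^sub>R (2 *\<^sub>R u) + m *\<^sub>R (- w)) = (l / 2) * N (2 *\<^sub>R u) + m * N (- w)"
      by (rule is_norm_additive_cone[OF N reflection]) (use that in simp_all)
    moreover have "(l / 2) *\<^sub>R (2 *\<^sub>R u) + m *\<^sub>R (- w) = l *\<^sub>R u - m *\<^sub>R w" by simp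
    ultimately show ?thesis
      using \<open>N u = 1\<close> \<open>N w = 1\<close> by (simp add: is_norm_scaleR[OF N] is_norm_minus[OF N])
  qed
  have nonneg: "N (\<alpha> *\<^sub>R u + \<beta> *\<^sub>R w) = \<bar>\<alpha>\<bar> + \<bar>\<beta>\<bar>" if "0 \<le> \<alpha>" for \<alpha> \<beta>
  proof (cases "0 \<le> \<beta>")
    case False
    then show ?thesis using minus[of \<alpha> "- \<beta>"] that by simp
  qed (use plus that in simp)
  show ?thesis
  proof (cases "0 \<le> \<alpha>")
    case False
    have "N (\<alpha> *\<^sub>R u + \<beta> *\<^sub>R w) = N ((- \<alpha>) *\<^sub>R u + (- \<beta>) *\<^sub>R w)"
      using is_norm_minus[OF N, of "\<alpha> *\<^sub>R u + \<beta> *\<^sub>R w"] by (simp add: algebra_simps)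
    then show ?thesis using nonneg[of "- \<alpha>" "- \<beta>"] False by simp
  qed (rule nonneg)
qed

lemma l1_coordinates_eq_0:
  fixes u w :: "'a::real_vector"
  assumes l1: "\<And>\<alpha> \<beta>. N (\<alpha> *\<^sub>R u + \<beta> *\<^sub>R w) = \<bar>\<alpha>\<bar> + \<bar>\<beta>\<bar>"
    and "\<alpha> *\<^sub>R u + \<beta> *\<^sub>R w = 0"
  shows "\<alpha> = 0" "\<beta> = 0"
  using l1[of \<alpha> \<beta>] l1[of 0 0, simplified] assms(2) by auto

lemma is_norm_ball_eq_parallelogram:
  assumes N: "is_norm N" and l1: "\<And>\<alpha> \<beta>. N (\<alpha> *\<^sub>R u + \<beta> *\<^sub>R w) = \<bar>\<alpha>\<bar> + \<bar>\<beta>\<bar>"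
  shows "{v. N v \<le> 1} =
    {- u + s *\<^sub>R (u + w) + r *\<^sub>R (u - w) | s r. 0 \<le> s \<and> s \<le> 1 \<and> 0 \<le> r \<and> r \<le> 1}"
    (is "_ = ?P")
proof -
  have rep: "- u + s *\<^sub>R (u + w) + r *\<^sub>R (u - w) = (s + r - 1) *\<^sub>R u + (s - r) *\<^sub>R w" for s r
    by (simp add: algebra_simps)
  have "w \<noteq> 0" using l1[of 0 1] is_norm_zero[OF N] by auto
  moreover have "u \<notin> span {w}"
  proof
    assume "u \<in> span {w}"
    then obtain c where "1 *\<^sub>R u + (- c) *\<^sub>R w = 0" by (auto simp: span_singleton)
    then show False using l1_coordinates_eq_0(1)[OF l1] by fastforce
  qed
  ultimately have coordinates: "\<exists>\<alpha> \<beta>. v = \<alpha> *\<^sub>R u + \<beta> *\<^sub>R w" for v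
    by (rule pair_coordinates) blast
  show ?thesis
  proof (intro subset_antisym subsetI)
    fix v assume "v \<in> {v. N v \<le> 1}"
    moreover obtain \<alpha> \<beta> where v: "v = \<alpha> *\<^sub>R u + \<beta> *\<^sub>R w" using coordinates by blast
    ultimately have "\<bar>\<alpha>\<bar> + \<bar>\<beta>\<bar> \<le> 1" using l1 by simp
    then have "0 \<le> (\<alpha> + \<beta> + 1) / 2" "(\<alpha> + \<beta> + 1) / 2 \<le> 1"
      and "0 \<le> (\<alpha> - \<beta> + 1) / 2" "(\<alpha> - \<beta> + 1) / 2 \<le> 1"
      by (simp_all add: abs_le_iff)
    moreover have "v = - u + ((\<alpha> + \<beta> + 1) / 2) *\<^sub>R (u + w) + ((\<alpha> - \<beta> + 1) / 2) *\<^sub>R (u - w)"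
      unfolding rep v by (simp add: field_simps)
    ultimately show "v \<in> ?P" by blast
  next
    fix v assume "v \<in> ?P"
    then obtain s r where "0 \<le> s" "s \<le> 1" "0 \<le> r" "r \<le> 1"
      and "v = (s + r - 1) *\<^sub>R u + (s - r) *\<^sub>R w" unfolding rep by blast
    then show "v \<in> {v. N v \<le> 1}" using l1 by simp
  qed
qed

lemma rectilinear_if_l1_coordinates:
  assumes N: "is_norm N" and l1: "\<And>\<alpha> \<beta>. N (\<alpha> *\<^sub>R u + \<beta> *\<^sub>R w) = \<bar>\<alpha>\<bar> + \<bar>\<beta>\<bar>"
  shows "rectilinear N"
proof -
  have "u - w \<noteq> 0"
    using l1_coordinates_eq_0(1)[OF l1, of 1 "-1"] by auto
  moreover have "u + w \<notin> span {u - w}"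
  proof
    assume "u + w \<in> span {u - w}"
    then obtain c where "(1 - c) *\<^sub>R u + (1 + c) *\<^sub>R w = 0"
      by (auto simp: span_singleton algebra_simps)
    then show False using l1_coordinates_eq_0[OF l1] by fastforce
  qed
  ultimately have "independent {u + w, u - w}" "u + w \<noteq> u - w"
    using independent_pair by blast+
  then show ?thesis
    unfolding rectilinear_def is_parallelogram_def unit_circle_def
    frontier_is_norm_ball[OF N, symmetric] is_norm_ball_eq_parallelogram[OF N l1]
    by blast
qed

lemma T_map_birkhoff_decomposition:
  assumes N: "is_norm N" and xy: "birkhoff_orth N x y"
  obtains a t where "z = a *\<^sub>R x + t *\<^sub>R y" "T_map x y z = 2 *\<^sub>R (a *\<^sub>R x) - z"
    "N (a *\<^sub>R x) \<le> N z"
proof -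
  have "y \<noteq> 0" using xy by (simp add: birkhoff_orth_def)
  moreover have "x \<notin> span {y}" by (rule birkhoff_orth_not_in_span[OF N xy])
  ultimately obtain a t where z: "z = a *\<^sub>R x + t *\<^sub>R y" by (rule pair_coordinates)
  have "T_map x y z = a *\<^sub>R x - t *\<^sub>R y"
    unfolding z by (rule T_map_apply[OF \<open>y \<noteq> 0\<close> \<open>x \<notin> span {y}\<close>])
  also have "\<dots> = 2 *\<^sub>R (a *\<^sub>R x) - z" unfolding z scaleR_2 by simp
  finally show ?thesis
    using that z birkhoff_orth_scaleR_le[OF N xy, of a t] by blast
qed

lemma norm_T_map_le:
  assumes N: "is_norm N" and xy: "birkhoff_orth N x y"
  shows "N (T_map x y z) \<le> 3 * N z"
proof -
  obtain a t :: real where "T_map x y z = 2 *\<^sub>R (a *\<^sub>R x) - z" "N (a *\<^sub>R x) \<le> N z"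
    using T_map_birkhoff_decomposition[OF N xy] .
  then show ?thesis
    using is_norm_diff[OF N, of "2 *\<^sub>R (a *\<^sub>R x)" z] by (simp add: is_norm_scaleR[OF N])
qed

lemma rectilinear_if_norm_T_map_eq_3:
  assumes N: "is_norm N" and xy: "birkhoff_orth N x y"
    and "N z = 1" and three: "N (T_map x y z) = 3"
  shows "rectilinear N"
proof -
  obtain a t where z: "z = a *\<^sub>R x + t *\<^sub>R y" and T: "T_map x y z = 2 *\<^sub>R (a *\<^sub>R x) - z"
    and "N (a *\<^sub>R x) \<le> N z"
    using T_map_birkhoff_decomposition[OF N xy] .
  define u where "u = a *\<^sub>R x"
  have "3 \<le> 2 * N u + 1"
    using three is_norm_diff[OF N, of "2 *\<^sub>R u" z] \<open>N z = 1\<close>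
    by (simp add: T u_def is_norm_scaleR[OF N])
  then have "N u = 1" using \<open>N (a *\<^sub>R x) \<le> N z\<close> \<open>N z = 1\<close> by (simp add: u_def)
  then have "a \<noteq> 0" by (auto simp: u_def is_norm_zero[OF N])
  have "t \<noteq> 0"
  proof
    assume "t = 0"
    then have "z = u" by (simp add: z u_def)
    then have "T_map x y z = u" unfolding T u_def scaleR_2 by simp
    then show False using three \<open>N u = 1\<close> by simp
  qed
  have "birkhoff_orth N u (z - u)"
    using birkhoff_orth_scaleR[OF N xy \<open>a \<noteq> 0\<close> \<open>t \<noteq> 0\<close>] by (simp add: z u_def)
  moreover have "N (2 *\<^sub>R u - z) = 3" using three by (simp add: T u_def)
  ultimately show ?thesis
    using rectilinear_if_l1_coordinates[OF N is_norm_l1_coordinates[OF N \<open>N u = 1\<close> \<open>N z = 1\<close>]]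
    by blast
qed

theorem lemma5p1:
  fixes N :: "real^2 \<Rightarrow> real" and x y :: "real^2"
  assumes "is_norm N"
    and "x \<noteq> 0" and "y \<noteq> 0"
    and "birkhoff_orth N x y"
  shows "(\<forall>z\<in>unit_circle N. N (T_map x y z) \<le> 3)
       \<and> ((\<exists>z\<in>unit_circle N. N (T_map x y z) = 3) \<longrightarrow> rectilinear N)"
proof (intro conjI ballI impI)
  fix z assume "z \<in> unit_circle N"
  then show "N (T_map x y z) \<le> 3"
    using norm_T_map_le[OF assms(1,4), of z] by (simp add: unit_circle_def)
next
  assume "\<exists>z\<in>unit_circle N. N (T_map x y z) = 3"
  then show "rectilinear N"
    using rectilinear_if_norm_T_map_eq_3[OF assms(1,4)] by (auto simp: unit_circle_def)
qed

end
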